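(* Let $1\le k\le d+1$ and let $\Delta_k^d=\operatorname{tconv}\{-e_I: I\subseteq[d+1],\ |I|=k\}\subseteq\mathbb{T}^d$ be the $k$-th tropical hypersimplex. Then $\Delta_k^d$ is the intersection of its $d+1$ cornered halfspaces and the tropical halfspaces $H(\mathbf{0},I)$ with $I$ ranging over all $(d-k+2)$-element subsets of $[d+1]$.
   Context: Tropical arithmetic is min-plus: $a\oplus b=\min(a,b)$, $a\odot b=a+b$; $\mathbb{T}^d=\mathbb{R}^{d+1}/\mathbb{R}(1,\dots,1)$; $\operatorname{tconv}\{v_1,\dots,v_n\}=\{\bigoplus_l\lambda_l\odot v_l:\lambda_l\in\mathbb{R}\}$ (componentwise minimum of $\lambda_l+v_l$). For $I\subseteq[d+1]$, $e_I=\sum_{i\in I}e_i$. For $p\in\mathbb{T}^d$ and nonempty $I\subseteq[d+1]$, the closed tropical halfspace with apex $p$ and type $I$ is $H(p,I)=\{x\in\mathbb{T}^d:\min_{i\in I}(x_i-p_i)\le\min_{j\notin I}(x_j-p_j)\}$ (minimum over the empty set is $+\infty$); equivalently $p+\bigcup_{i\in I}\bar S_i$ where $\bar S_i=\{\xi:\xi_i=\min_m\xi_m\}$. For a tropical polytope with generators $v_1,\dots,v_n$, its $m$-th corner is $c_m=\bigoplus_{l}(-v_{l,m})\odot v_l$ and its $m$-th cornered halfspace is $H(c_m,\{m\})=c_m+\bar S_m$. $\mathbf{0}$ denotes the origin of $\mathbb{T}^d$. *)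

theory Defs
  imports "HOL-Analysis.Analysis"
begin

text \<open>Points of the tropical projective torus T^d are represented by vectors in
  real^'n with CARD('n) = d+1; all sets below are invariant under adding
  constant vectors, i.e. they are preimages of subsets of T^d.\<close>

definition tconv :: "(real^'n) set \<Rightarrow> (real^'n) set" where
  "tconv V = {x. \<exists>lam::real^'n \<Rightarrow> real. \<forall>i. x $ i = Min ((\<lambda>v. lam v + v $ i) ` V)}"

definition trop_halfspace :: "real^'n \<Rightarrow> 'n set \<Rightarrow> (real^'n) set" where
  "trop_halfspace p I = {x. \<exists>i\<in>I. \<forall>m. x $ i - p $ i \<le> x $ m - p $ m}"

definition tcorner :: "(real^'n) set \<Rightarrow> 'n \<Rightarrow> real^'n" where
  "tcorner V m = (\<chi> i. Min ((\<lambda>v. v $ i - v $ m) ` V))"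

definition cornered_halfspace :: "(real^'n) set \<Rightarrow> 'n \<Rightarrow> (real^'n) set" where
  "cornered_halfspace V m = trop_halfspace (tcorner V m) {m}"

definition eI :: "'n set \<Rightarrow> real^'n" where
  "eI I = (\<chi> i. if i \<in> I then 1 else 0)"

definition hypersimplex_gens :: "nat \<Rightarrow> (real^'n::finite) set" where
  "hypersimplex_gens k = {- eI I | I. card I = k}"

definition hypersimplex :: "nat \<Rightarrow> (real^'n::finite) set" where
  "hypersimplex k = tconv (hypersimplex_gens k)"

end

theory Submission
  imports Defs
begin

text \<open>A point x lies in the k-th tropical hypersimplex exactly when its minimum is
  attained at k or more coordinates and x_m \<le> x_j + 1 for all m, j.
  The cornered halfspaces cut out the second condition, because the corners of the
  generators have entries 0 and -1. The halfspaces H(0,I) say that I meets the set of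
  minimal coordinates of x, and a set meets every I of size d-k+2 precisely when it
  has at least k elements. Conversely, such an x is the tropical combination of the
  generators with coefficients \<lambda>_v = max_j (x_j - v_j): for every i the generator
  -e_I, where I consists of i and k-1 further minimal coordinates, attains x_i.\<close>

definition min_coords :: "real^'n \<Rightarrow> 'n set" where
  "min_coords x = {i. \<forall>m. x $ i \<le> x $ m}"

lemma trop_halfspace_zero_iff: "x \<in> trop_halfspace 0 I \<longleftrightarrow> I \<inter> min_coords x \<noteq> {}"
  unfolding trop_halfspace_def min_coords_def by auto

lemma meets_all_subsets_of_card_iff:
  assumes "finite U" "A \<subseteq> U" "k \<le> card U"
  shows "(\<forall>I\<subseteq>U. card I = card U - k + 1 \<longrightarrow> I \<inter> A \<noteq> {}) \<longleftrightarrow> k \<le> card A"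
proof
  assume meets: "\<forall>I\<subseteq>U. card I = card U - k + 1 \<longrightarrow> I \<inter> A \<noteq> {}"
  show "k \<le> card A"
  proof (rule ccontr)
    assume "\<not> k \<le> card A"
    then have "card U - k + 1 \<le> card (U - A)"
      using assms card_Diff_subset[of A U] finite_subset by fastforce
    then obtain I where "I \<subseteq> U - A" "card I = card U - k + 1"
      using obtain_subset_with_card_n by metis
    then show False using meets by blast
  qed
next
  assume "k \<le> card A"
  show "\<forall>I\<subseteq>U. card I = card U - k + 1 \<longrightarrow> I \<inter> A \<noteq> {}"
  proof (intro allI impI)
    fix I assume I: "I \<subseteq> U" "card I = card U - k + 1"
    have "card (A \<union> I) + card (A \<inter> I) = card A + card I"
      using assms I finite_subset card_Un_Int by metis
    moreover have "card (A \<union> I) \<le> card U" using assms I by (intro card_mono) auto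
    ultimately have "card (A \<inter> I) \<noteq> 0" using \<open>k \<le> card A\<close> I assms(3) by linarith
    then show "I \<inter> A \<noteq> {}" by (metis Int_commute card.empty)
  qed
qed

lemma Inter_trop_halfspace_zero_iff:
  fixes x :: "real^'n::finite"
  assumes "k \<le> CARD('n)"
  shows "x \<in> (\<Inter>I\<in>{I :: 'n set. card I = CARD('n) - k + 1}. trop_halfspace 0 I)
    \<longleftrightarrow> k \<le> card (min_coords x)"
  using meets_all_subsets_of_card_iff[of UNIV "min_coords x" k] assms
  by (auto simp: trop_halfspace_zero_iff)

lemma tcorner_self:
  assumes "V \<noteq> {}"
  shows "tcorner V m $ m = 0"
proof -
  have "(\<lambda>v. v $ m - v $ m) ` V = {0}" using assms by auto
  then show ?thesis unfolding tcorner_def by simp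
qed

lemma tconv_subset_cornered_halfspace:
  assumes fin: "finite V" and ne: "V \<noteq> {}"
  shows "tconv V \<subseteq> cornered_halfspace V m"
proof
  fix x assume "x \<in> tconv V"
  then obtain lam where lam: "\<And>i. x $ i = Min ((\<lambda>v. lam v + v $ i) ` V)"
    unfolding tconv_def by blast
  have "x $ m - tcorner V m $ m \<le> x $ j - tcorner V m $ j" for j
  proof -
    have "x $ j \<in> (\<lambda>v. lam v + v $ j) ` V" unfolding lam[of j] using fin ne by (intro Min_in) auto
    then obtain w where w: "w \<in> V" "x $ j = lam w + w $ j" by blast
    have "x $ m \<le> lam w + w $ m" unfolding lam[of m] using fin w by (intro Min_le) auto
    moreover have "tcorner V m $ j \<le> w $ j - w $ m" unfolding tcorner_def using fin w by simp
    ultimately show ?thesis using tcorner_self[OF ne, of m] w by linarith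
  qed
  then show "x \<in> cornered_halfspace V m"
    unfolding cornered_halfspace_def trop_halfspace_def by auto
qed

text \<open>The coefficients \<lambda>_v = max_j (x_j - v_j) are the largest ones with
  \<lambda>_v + v \<ge> x, so x is in the hull iff each coordinate is attained by one of them.\<close>

lemma tconvI:
  fixes x :: "real^'n::finite"
  assumes fin: "finite V" and ne: "V \<noteq> {}"
    and attained: "\<And>i. \<exists>v\<in>V. \<forall>j. x $ j - v $ j \<le> x $ i - v $ i"
  shows "x \<in> tconv V"
proof -
  define lam where "lam v = Max (range (\<lambda>j. x $ j - v $ j))" for v :: "real^'n"
  have "x $ i = Min ((\<lambda>v. lam v + v $ i) ` V)" for i
  proof (rule antisym)
    have "x $ i - v $ i \<le> lam v" for v unfolding lam_def by (rule Max_ge) auto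
    then have "\<forall>v\<in>V. x $ i \<le> lam v + v $ i" by (simp add: algebra_simps)
    then show "x $ i \<le> Min ((\<lambda>v. lam v + v $ i) ` V)" using fin ne by (simp add: Min_ge_iff)
  next
    obtain w where w: "w \<in> V" "\<forall>j. x $ j - w $ j \<le> x $ i - w $ i" using attained by blast
    then have "lam w \<le> x $ i - w $ i" unfolding lam_def by (intro Max.boundedI) auto
    then have "lam w + w $ i \<le> x $ i" by simp
    moreover have "Min ((\<lambda>v. lam v + v $ i) ` V) \<le> lam w + w $ i"
      using fin w by (intro Min_le) auto
    ultimately show "Min ((\<lambda>v. lam v + v $ i) ` V) \<le> x $ i" by linarith
  qed
  then show ?thesis unfolding tconv_def by blast
qed

lemma hypersimplex_gens_eq: "hypersimplex_gens k = (\<lambda>I. - eI I) ` {I. card I = k}"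
  unfolding hypersimplex_gens_def by auto

lemma finite_hypersimplex_gens: "finite (hypersimplex_gens k :: (real^'n::finite) set)"
  unfolding hypersimplex_gens_eq by simp

lemma hypersimplex_gens_nonempty:
  assumes "k \<le> CARD('n::finite)"
  shows "(hypersimplex_gens k :: (real^'n) set) \<noteq> {}"
proof -
  obtain I :: "'n set" where "card I = k" using obtain_subset_with_card_n[of k UNIV] assms by blast
  then show ?thesis unfolding hypersimplex_gens_eq by blast
qed

lemma hypersimplex_gens_coords:
  "v \<in> hypersimplex_gens k \<Longrightarrow> \<exists>I. card I = k \<and> (\<forall>i. v $ i = (if i \<in> I then -1 else 0))"
  unfolding hypersimplex_gens_eq by (auto simp: eI_def)

lemma tcorner_hypersimplex_gens_ge:
  assumes "k \<le> CARD('n::finite)"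
  shows "-1 \<le> tcorner (hypersimplex_gens k :: (real^'n) set) m $ j"
proof -
  have "-1 \<le> v $ j - v $ m" if "v \<in> hypersimplex_gens k" for v :: "real^'n"
    using hypersimplex_gens_coords[OF that] by auto
  then show ?thesis
    unfolding tcorner_def vec_lambda_beta
    using hypersimplex_gens_nonempty[OF assms] finite_hypersimplex_gens[of k]
    by (subst Min_ge_iff) auto
qed

lemma cornered_halfspace_hypersimplex_gensD:
  fixes x :: "real^'n::finite"
  assumes "k \<le> CARD('n)" "x \<in> cornered_halfspace (hypersimplex_gens k) m"
  shows "x $ m \<le> x $ j + 1"
proof -
  let ?c = "tcorner (hypersimplex_gens k :: (real^'n) set) m"
  have "x $ m - ?c $ m \<le> x $ j - ?c $ j"
    using assms(2) unfolding cornered_halfspace_def trop_halfspace_def by auto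
  then show ?thesis
    using tcorner_self[OF hypersimplex_gens_nonempty[OF assms(1)], of m]
      tcorner_hypersimplex_gens_ge[OF assms(1), of m j] by linarith
qed

text \<open>A generator w with least coefficient gives x_i \<le> \<lambda>_w - 1 on the k coordinates
  where w is -1, while every coordinate of x is at least min_v \<lambda>_v - 1.\<close>

lemma card_min_coords_hypersimplex:
  assumes "k \<le> CARD('n::finite)" "x \<in> (hypersimplex k :: (real^'n) set)"
  shows "k \<le> card (min_coords x)"
proof -
  let ?V = "hypersimplex_gens k :: (real^'n) set"
  have fin: "finite ?V" and ne: "?V \<noteq> {}"
    using finite_hypersimplex_gens hypersimplex_gens_nonempty[OF assms(1)] by auto
  obtain lam where lam: "\<And>i. x $ i = Min ((\<lambda>v. lam v + v $ i) ` ?V)"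
    using assms(2) unfolding hypersimplex_def tconv_def by blast
  have "Min (lam ` ?V) \<in> lam ` ?V" using fin ne by (intro Min_in) auto
  then obtain w where w: "w \<in> ?V" "lam w = Min (lam ` ?V)" by auto
  obtain J where J: "card J = k" "\<forall>i. w $ i = (if i \<in> J then -1 else 0)"
    using hypersimplex_gens_coords[OF w(1)] by blast
  have "x $ i \<le> x $ m" if "i \<in> J" for i m
  proof -
    have "x $ m \<in> (\<lambda>v. lam v + v $ m) ` ?V" unfolding lam[of m] using fin ne by (intro Min_in) auto
    then obtain v where v: "v \<in> ?V" "x $ m = lam v + v $ m" by blast
    have "-1 \<le> v $ m" using hypersimplex_gens_coords[OF v(1)] by auto
    moreover have "x $ i \<le> lam w + w $ i" unfolding lam[of i] using fin w(1) by (intro Min_le) auto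
    moreover have "lam w \<le> lam v" using w(2) fin v(1) by simp
    ultimately show ?thesis using v J(2) that by auto
  qed
  then have "J \<subseteq> min_coords x" unfolding min_coords_def by blast
  then show ?thesis using J(1) card_mono[of "min_coords x" J] by auto
qed

lemma hypersimplexI:
  assumes "1 \<le> k" "k \<le> card (min_coords x)" and bounded: "\<And>m j. x $ m \<le> x $ j + 1"
  shows "x \<in> (hypersimplex k :: (real^'n::finite) set)"
  unfolding hypersimplex_def
proof (rule tconvI[OF finite_hypersimplex_gens])
  show "(hypersimplex_gens k :: (real^'n) set) \<noteq> {}"
    using assms(2) card_mono[of UNIV "min_coords x"]
    by (intro hypersimplex_gens_nonempty) auto
  fix i
  have "k - 1 \<le> card (min_coords x - {i})"
    using assms(2) card_Diff_singleton_if[of "min_coords x" i] by auto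
  then obtain S where S: "S \<subseteq> min_coords x - {i}" "card S = k - 1"
    using obtain_subset_with_card_n by metis
  define I where "I = insert i S"
  have "card I = k"
    unfolding I_def using S assms(1) finite_subset[of S] by (subst card_insert_disjoint) auto
  then have gen: "- eI I \<in> hypersimplex_gens k" unfolding hypersimplex_gens_def by blast
  have "x $ j + (if j \<in> I then 1 else 0) \<le> x $ i + 1" for j
    using S bounded[of j i] unfolding I_def min_coords_def by auto
  then show "\<exists>v\<in>hypersimplex_gens k. \<forall>j. x $ j - v $ j \<le> x $ i - v $ i"
    using gen by (intro bexI[of _ "- eI I"]) (auto simp: eI_def I_def)
qed

theorem mainTheorem3:
  fixes k :: nat
  assumes "1 \<le> k" and "k \<le> CARD('n::finite)"
  shows "(hypersimplex k :: (real^'n) set) =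
    (\<Inter>m. cornered_halfspace (hypersimplex_gens k) m) \<inter>
    (\<Inter>I\<in>{I :: 'n set. card I = CARD('n) - k + 1}. trop_halfspace 0 I)"
proof (rule set_eqI)
  fix x :: "real^'n"
  let ?C = "\<Inter>m. cornered_halfspace (hypersimplex_gens k) m"
  have "x \<in> hypersimplex k \<longleftrightarrow> x \<in> ?C \<and> k \<le> card (min_coords x)"
  proof (intro iffI conjI)
    assume "x \<in> hypersimplex k"
    then show "x \<in> ?C"
      using tconv_subset_cornered_halfspace[OF finite_hypersimplex_gens
          hypersimplex_gens_nonempty[OF assms(2)]]
      unfolding hypersimplex_def by blast
  next
    show "x \<in> hypersimplex k \<Longrightarrow> k \<le> card (min_coords x)"
      by (rule card_min_coords_hypersimplex[OF assms(2)])
  next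
    assume "x \<in> ?C \<and> k \<le> card (min_coords x)"
    then show "x \<in> hypersimplex k"
      using cornered_halfspace_hypersimplex_gensD[OF assms(2)]
      by (intro hypersimplexI[OF assms(1)]) auto
  qed
  then show "x \<in> hypersimplex k \<longleftrightarrow> x \<in> ?C \<inter>
      (\<Inter>I\<in>{I :: 'n set. card I = CARD('n) - k + 1}. trop_halfspace 0 I)"
    unfolding Int_iff Inter_trop_halfspace_zero_iff[OF assms(2)] .
qed

end
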